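(* For the discrete scheme described in the context (any $n\ge1$, $\delta t>0$): (i) $z\mapsto\theta^n(t,z)$ is nondecreasing for every $t\in[0,T)$; (ii) with $\hat\theta^n(t,z)=\theta^n(t,F^n(t,z))$ and $\hat q^n(t,z)=q^n(t,F^n(t,z))$, one has $\hat\theta^n(t,z)+\hat q^n(t,z)=\theta^n_0(z)+q^n_0(z)$; (iii) $t\mapsto\hat\theta^n(t,z)$ is nondecreasing for every $z\in[0,1)$; (iv) $q^n(t,z)\le Q^{sat}(\theta^n(t,z),z,k\delta t)$, where $k$ is the integer with $k\delta t\le t<(k+1)\delta t$.
   Context: $Q^{sat}:\mathbb{R}^3\to\mathbb{R}$ is smooth with $\partial_\theta Q^{sat}>0$, $\partial_zQ^{sat}<0$. $\Theta(w,z,t)$ is the solution $\theta$ of $\theta+Q^{sat}(\theta,z,t)=w$ (assumed well defined), with $\partial_w\Theta>0$, $\partial_z\Theta>0$. Discrete scheme. Fix $T>0$, $n\ge1$, $\delta t>0$, $z_i=i/n$, $J_i=[\frac{i-1}{n},\frac in)$. There are $n$ parcels $j=1,\dots,n$; initially parcel $j$ is at position $j$ with value $\theta^n_j$, where $\theta^n_1\le\dots\le\theta^n_n$ and $q^n_j\le Q^{sat}(\theta^n_j,z_j,0)$; parcel $j$ carries the fixed number $\theta^M_j=\theta^n_j+q^n_j$. One time step from $k\delta t$ to $(k+1)\delta t$, with $\tau=(k+1)\delta t$: positions $m=n,\dots,1$ are processed in this order. At stage $m$, with current configuration (parcel $p(i)$ at position $i$ with value $\vartheta_i$), position $i$ is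 wet if $\vartheta_i<\Theta(\theta^M_{p(i)},z_i,\tau)$; a wet position $i_0\le m$ is eligible if for every $i$ with $i_0<i\le m$, either $i$ is not wet and $\vartheta_i<\Theta(\theta^M_{p(i_0)},z_i,\tau)$, or $i$ is wet and $\theta^M_{p(i_0)}>\theta^M_{p(i)}$. If some position is eligible, let $i_*$ be the eligible position whose parcel has the largest $\theta^M$ (largest position in case of ties); that parcel moves to position $m$ with new value $\Theta(\theta^M_{p(i_* )},z_m,\tau)$, the parcels at $i_*+1,\dots,m$ move down one position keeping their values, others unchanged; otherwise nothing changes. After stage $1$ one has the configuration at time $(k+1)\delta t$. Let $\alpha_{k\delta t}(j)$ be the position of parcel $j$ after $k$ steps, $\theta^n_i(k\delta t)$ the value at position $i$, and $q^n_i(k\delta t)=\theta^M_p-\theta^n_i(k\delta t)$, $p$ the parcel at position $i$. For $k\delta t\le t<(k+1)\delta t$ and $z\in J_j$: $\theta^n(t,z)=\theta^n_j(k\delta t)$, $q^n(t,z)=q^n_j(k\delta t)$, $F^n(t,z)=z-z_j+z_{\alpha_{k\delta t}(j)}$, $\theta^n_0(z)=\theta^n_j$, $q^n_0(z)=q^n_j$. *)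

theory Defs
  imports "HOL-Analysis.Analysis"
begin

text \<open>A configuration is a pair (p, v):
  p i is the parcel at position i, v i the value at position i (positions 1..n).
  thM is the fixed number carried by each parcel; Th is the function Theta.\<close>

type_synonym config = "(nat \<Rightarrow> nat) \<times> (nat \<Rightarrow> real)"

definition zpos :: "nat \<Rightarrow> nat \<Rightarrow> real" where
  "zpos n i = real i / real n"

definition wet :: "(real \<Rightarrow> real \<Rightarrow> real \<Rightarrow> real) \<Rightarrow> (nat \<Rightarrow> real) \<Rightarrow> nat \<Rightarrow> real
    \<Rightarrow> config \<Rightarrow> nat \<Rightarrow> bool" where
  "wet Th thM n tau c i = (snd c i < Th (thM (fst c i)) (zpos n i) tau)"

definition eligible :: "(real \<Rightarrow> real \<Rightarrow> real \<Rightarrow> real) \<Rightarrow> (nat \<Rightarrow> real) \<Rightarrow> nat \<Rightarrow> real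
    \<Rightarrow> config \<Rightarrow> nat \<Rightarrow> nat \<Rightarrow> bool" where
  "eligible Th thM n tau c m i0 =
     (1 \<le> i0 \<and> i0 \<le> m \<and> wet Th thM n tau c i0 \<and>
      (\<forall>i. i0 < i \<and> i \<le> m \<longrightarrow>
          ((\<not> wet Th thM n tau c i \<and> snd c i < Th (thM (fst c i0)) (zpos n i) tau) \<or>
           (wet Th thM n tau c i \<and> thM (fst c i0) > thM (fst c i)))))"

definition chosen :: "(real \<Rightarrow> real \<Rightarrow> real \<Rightarrow> real) \<Rightarrow> (nat \<Rightarrow> real) \<Rightarrow> nat \<Rightarrow> real
    \<Rightarrow> config \<Rightarrow> nat \<Rightarrow> nat" where
  "chosen Th thM n tau c m =
     (GREATEST i. eligible Th thM n tau c m i \<and>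
        (\<forall>j. eligible Th thM n tau c m j \<longrightarrow> thM (fst c j) \<le> thM (fst c i)))"

definition stage :: "(real \<Rightarrow> real \<Rightarrow> real \<Rightarrow> real) \<Rightarrow> (nat \<Rightarrow> real) \<Rightarrow> nat \<Rightarrow> real
    \<Rightarrow> nat \<Rightarrow> config \<Rightarrow> config" where
  "stage Th thM n tau m c =
     (if \<exists>i. eligible Th thM n tau c m i then
        (let s = chosen Th thM n tau c m in
          ((\<lambda>k. if k = m then fst c s else if s \<le> k \<and> k < m then fst c (k + 1) else fst c k),
           (\<lambda>k. if k = m then Th (thM (fst c s)) (zpos n m) tau
                 else if s \<le> k \<and> k < m then snd c (k + 1) else snd c k)))
      else c)"

fun sweep :: "(real \<Rightarrow> real \<Rightarrow> real \<Rightarrow> real) \<Rightarrow> (nat \<Rightarrow> real) \<Rightarrow> nat \<Rightarrow> real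
    \<Rightarrow> nat \<Rightarrow> config \<Rightarrow> config" where
  "sweep Th thM n tau 0 c = c"
| "sweep Th thM n tau (Suc m) c = sweep Th thM n tau m (stage Th thM n tau (Suc m) c)"

fun cfg :: "(real \<Rightarrow> real \<Rightarrow> real \<Rightarrow> real) \<Rightarrow> (nat \<Rightarrow> real) \<Rightarrow> nat \<Rightarrow> real
    \<Rightarrow> (nat \<Rightarrow> real) \<Rightarrow> nat \<Rightarrow> config" where
  "cfg Th thM n dt th0 0 = ((\<lambda>i. i), th0)"
| "cfg Th thM n dt th0 (Suc k) =
     sweep Th thM n (real (Suc k) * dt) n (cfg Th thM n dt th0 k)"

definition alpha :: "config \<Rightarrow> nat \<Rightarrow> nat \<Rightarrow> nat" where
  "alpha c n j = (THE i. 1 \<le> i \<and> i \<le> n \<and> fst c i = j)"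

text \<open>Index j with z in J_j = [(j-1)/n, j/n), and k with k dt <= t < (k+1) dt.\<close>
definition cell :: "nat \<Rightarrow> real \<Rightarrow> nat" where
  "cell n z = nat \<lfloor>z * real n\<rfloor> + 1"

definition tindex :: "real \<Rightarrow> real \<Rightarrow> nat" where
  "tindex dt t = nat \<lfloor>t / dt\<rfloor>"

definition theta_n :: "(real \<Rightarrow> real \<Rightarrow> real \<Rightarrow> real) \<Rightarrow> (nat \<Rightarrow> real) \<Rightarrow> nat \<Rightarrow> real
    \<Rightarrow> (nat \<Rightarrow> real) \<Rightarrow> real \<Rightarrow> real \<Rightarrow> real" where
  "theta_n Th thM n dt th0 t z = snd (cfg Th thM n dt th0 (tindex dt t)) (cell n z)"

definition q_n :: "(real \<Rightarrow> real \<Rightarrow> real \<Rightarrow> real) \<Rightarrow> (nat \<Rightarrow> real) \<Rightarrow> nat \<Rightarrow> real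
    \<Rightarrow> (nat \<Rightarrow> real) \<Rightarrow> real \<Rightarrow> real \<Rightarrow> real" where
  "q_n Th thM n dt th0 t z =
     (let c = cfg Th thM n dt th0 (tindex dt t) in thM (fst c (cell n z)) - snd c (cell n z))"

definition F_n :: "(real \<Rightarrow> real \<Rightarrow> real \<Rightarrow> real) \<Rightarrow> (nat \<Rightarrow> real) \<Rightarrow> nat \<Rightarrow> real
    \<Rightarrow> (nat \<Rightarrow> real) \<Rightarrow> real \<Rightarrow> real \<Rightarrow> real" where
  "F_n Th thM n dt th0 t z =
     (let c = cfg Th thM n dt th0 (tindex dt t); j = cell n z in
        z - zpos n j + zpos n (alpha c n j))"

definition theta0_n :: "nat \<Rightarrow> (nat \<Rightarrow> real) \<Rightarrow> real \<Rightarrow> real" where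
  "theta0_n n th0 z = th0 (cell n z)"

definition q0_n :: "nat \<Rightarrow> (nat \<Rightarrow> real) \<Rightarrow> real \<Rightarrow> real" where
  "q0_n n q0 z = q0 (cell n z)"

end

theory Submission
  imports Defs
begin

text \<open>A stage
  lifts a wet parcel to position \<open>m\<close>, giving it the value \<open>\<Theta>(\<theta>\<^sup>M, z\<^sub>m, \<tau>)\<close>, which is above
  its old value, while the parcels in between slide down one place with unchanged values; so
  every parcel's value only grows in time, and after stage \<open>m\<close> position \<open>m\<close> is dry, which is
  the bound \<open>q \<le> Q\<^sup>sat\<close>. Sortedness survives a stage because the value placed at \<open>m\<close> lies
  between the values at \<open>m\<close> and \<open>m + 1\<close>: the upper bound holds since the parcel chosen at
  stage \<open>m + 1\<close> has the largest \<open>\<theta>\<^sup>M\<close> among the eligible ones, and any parcel eligible at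
  stage \<open>m\<close> with larger \<open>\<theta>\<^sup>M\<close> would already have been eligible at stage \<open>m + 1\<close>.\<close>

lemma DERIV_pos_imp_mono:
  fixes f :: "real \<Rightarrow> real"
  assumes "\<And>x. \<exists>d>0. (f has_real_derivative d) (at x)"
  shows "mono f"
proof
  fix x y :: real assume "x \<le> y"
  then consider "x = y" | "x < y" by linarith
  then show "f x \<le> f y"
  proof cases
    case 2
    then show ?thesis using DERIV_pos_imp_increasing[of x y f] assms by fastforce
  qed simp
qed

lemma DERIV_neg_imp_antimono:
  fixes f :: "real \<Rightarrow> real"
  assumes "\<And>x. \<exists>d<0. (f has_real_derivative d) (at x)"
  shows "antimono f"
proof
  fix x y :: real assume "x \<le> y"
  then show "f y \<le> f x"
    using DERIV_nonpos_imp_nonincreasing[of x y f] assms by (meson less_imp_le)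
qed

lemma zpos_mono: "i \<le> j \<Longrightarrow> zpos n i \<le> zpos n j"
  unfolding zpos_def by (simp add: divide_right_mono)

lemma cell_bounds:
  assumes n: "1 \<le> n" and z: "0 \<le> z" "z < 1"
  shows "1 \<le> cell n z" "cell n z \<le> n" "z \<le> zpos n (cell n z)"
proof -
  have f0: "0 \<le> \<lfloor>z * real n\<rfloor>" using z n by simp
  have "z * real n < real n" using z n by simp
  then have f1: "\<lfloor>z * real n\<rfloor> < int n" by linarith
  show "1 \<le> cell n z" unfolding cell_def by simp
  show "cell n z \<le> n" unfolding cell_def using f0 f1 by linarith
  have "real (cell n z) = real_of_int \<lfloor>z * real n\<rfloor> + 1" unfolding cell_def using f0 by simp
  then have "z * real n \<le> real (cell n z)" by linarith
  then show "z \<le> zpos n (cell n z)" unfolding zpos_def using n by (simp add: field_simps)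
qed

lemma cell_mono: "z1 \<le> z2 \<Longrightarrow> cell n z1 \<le> cell n z2"
  unfolding cell_def by (simp add: floor_mono mult_right_mono nat_mono)

lemma cell_shift:
  assumes n: "1 \<le> n" and z: "0 \<le> z" and a: "1 \<le> a"
  shows "cell n (z - zpos n (cell n z) + zpos n a) = a"
proof -
  define f where "f = \<lfloor>z * real n\<rfloor>"
  have f0: "0 \<le> f" using z n unfolding f_def by simp
  have "real (cell n z) = real_of_int f + 1" unfolding cell_def f_def using f0 f_def by simp
  then have "(z - zpos n (cell n z) + zpos n a) * real n = z * real n + real_of_int (int a - f - 1)"
    using n unfolding zpos_def by (simp add: field_simps)
  then have "\<lfloor>(z - zpos n (cell n z) + zpos n a) * real n\<rfloor> = f + (int a - f - 1)"
    unfolding f_def by (simp only: floor_add_int)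
  then show ?thesis unfolding cell_def using a by simp
qed

lemma tindex_mono: "0 \<le> dt \<Longrightarrow> t1 \<le> t2 \<Longrightarrow> tindex dt t1 \<le> tindex dt t2"
  unfolding tindex_def by (simp add: divide_right_mono floor_mono nat_mono)

text \<open>After a stage that lifts the parcel at \<open>s\<close> to \<open>m\<close>, position \<open>k\<close> holds the parcel that was
  at \<open>stage_source s m k\<close>.\<close>

definition stage_source :: "nat \<Rightarrow> nat \<Rightarrow> nat \<Rightarrow> nat" where
  "stage_source s m k = (if k = m then s else if s \<le> k \<and> k < m then Suc k else k)"

lemma stage_source_above: "m < k \<Longrightarrow> stage_source s m k = k"
  by (simp add: stage_source_def)

lemma bij_betw_stage_source:
  assumes "1 \<le> s" "s \<le> m" "m \<le> n"
  shows "bij_betw (stage_source s m) {1..n} {1..n}"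
proof -
  have inj: "inj_on (stage_source s m) {1..n}"
    using assms(2) by (auto simp: inj_on_def stage_source_def split: if_splits)
  have "stage_source s m ` {1..n} \<subseteq> {1..n}"
    using assms by (auto simp: stage_source_def)
  then have "stage_source s m ` {1..n} = {1..n}" using endo_inj_surj[OF _ _ inj] by simp
  with inj show ?thesis unfolding bij_betw_def by simp
qed

locale parcel_scheme =
  fixes Th :: "real \<Rightarrow> real \<Rightarrow> real \<Rightarrow> real" and thM :: "nat \<Rightarrow> real" and n :: nat
  assumes mono_Th_w: "\<And>z t. mono (\<lambda>w. Th w z t)"
    and mono_Th_z: "\<And>w t. mono (\<lambda>z. Th w z t)"
begin

lemma Th_mono_w: "a \<le> b \<Longrightarrow> Th a z t \<le> Th b z t"
  using monoD[OF mono_Th_w] .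

lemma Th_mono_pos: "i \<le> j \<Longrightarrow> Th w (zpos n i) t \<le> Th w (zpos n j) t"
  using monoD[OF mono_Th_z zpos_mono] .

definition can_pass :: "real \<Rightarrow> config \<Rightarrow> nat \<Rightarrow> nat \<Rightarrow> bool" where
  "can_pass tau c i0 i \<longleftrightarrow>
     (\<not> wet Th thM n tau c i \<and> snd c i < Th (thM (fst c i0)) (zpos n i) tau) \<or>
     (wet Th thM n tau c i \<and> thM (fst c i) < thM (fst c i0))"

lemma eligible_iff:
  "eligible Th thM n tau c m i0 \<longleftrightarrow>
     1 \<le> i0 \<and> i0 \<le> m \<and> wet Th thM n tau c i0 \<and> (\<forall>i. i0 < i \<and> i \<le> m \<longrightarrow> can_pass tau c i0 i)"
  unfolding eligible_def can_pass_def by simp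

lemma eligible_self: "1 \<le> m \<Longrightarrow> wet Th thM n tau c m \<Longrightarrow> eligible Th thM n tau c m m"
  by (auto simp: eligible_iff)

lemma can_pass_mono:
  assumes "can_pass tau c s i" "thM (fst c s) \<le> thM (fst c s')"
  shows "can_pass tau c s' i"
  using assms Th_mono_w[OF assms(2), of "zpos n i" tau] unfolding can_pass_def by auto

lemma chosen_props:
  assumes "\<exists>i. eligible Th thM n tau c m i"
  shows eligible_chosen: "eligible Th thM n tau c m (chosen Th thM n tau c m)"
    and chosen_max: "\<And>j. eligible Th thM n tau c m j \<Longrightarrow>
      thM (fst c j) \<le> thM (fst c (chosen Th thM n tau c m))"
proof -
  let ?E = "{i. eligible Th thM n tau c m i}"
  let ?P = "\<lambda>i. eligible Th thM n tau c m i \<and>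
    (\<forall>j. eligible Th thM n tau c m j \<longrightarrow> thM (fst c j) \<le> thM (fst c i))"
  have fin: "finite ?E" by (rule finite_subset[of _ "{..m}"]) (auto simp: eligible_def)
  have "Max ((\<lambda>i. thM (fst c i)) ` ?E) \<in> (\<lambda>i. thM (fst c i)) ` ?E"
    using fin assms by (intro Max_in) auto
  then obtain i0 where "eligible Th thM n tau c m i0"
    "thM (fst c i0) = Max ((\<lambda>i. thM (fst c i)) ` ?E)" by auto
  with fin have "?P i0" by simp
  moreover have "\<And>i. ?P i \<Longrightarrow> i \<le> m" by (simp add: eligible_def)
  ultimately have "?P (GREATEST i. ?P i)" by (rule GreatestI_nat)
  then show "eligible Th thM n tau c m (chosen Th thM n tau c m)"
    "\<And>j. eligible Th thM n tau c m j \<Longrightarrow> thM (fst c j) \<le> thM (fst c (chosen Th thM n tau c m))"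
    unfolding chosen_def by auto
qed

lemma chosen_bounds:
  "\<exists>i. eligible Th thM n tau c m i \<Longrightarrow> 1 \<le> chosen Th thM n tau c m \<and> chosen Th thM n tau c m \<le> m"
  using eligible_chosen unfolding eligible_def by blast

lemma chosen_wet_lifted:
  assumes "\<exists>i. eligible Th thM n tau c m i" and "s = chosen Th thM n tau c m"
  shows "snd c s < Th (thM (fst c s)) (zpos n m) tau"
proof -
  have "snd c s < Th (thM (fst c s)) (zpos n s) tau"
    using eligible_chosen[OF assms(1)] assms(2) by (simp add: eligible_def wet_def)
  also have "\<dots> \<le> Th (thM (fst c s)) (zpos n m) tau"
    using chosen_bounds[OF assms(1)] assms(2) by (simp add: Th_mono_pos)
  finally show ?thesis .
qed

lemma stage_fst:
  "\<exists>i. eligible Th thM n tau c m i \<Longrightarrow> s = chosen Th thM n tau c m \<Longrightarrow>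
    fst (stage Th thM n tau m c) = fst c \<circ> stage_source s m"
  by (auto simp: stage_def stage_source_def Let_def)

lemma stage_snd:
  "\<exists>i. eligible Th thM n tau c m i \<Longrightarrow> s = chosen Th thM n tau c m \<Longrightarrow>
    snd (stage Th thM n tau m c) k =
      (if k = m then Th (thM (fst c s)) (zpos n m) tau else snd c (stage_source s m k))"
  by (simp add: stage_def stage_source_def Let_def)

lemma stage_none: "\<not> (\<exists>i. eligible Th thM n tau c m i) \<Longrightarrow> stage Th thM n tau m c = c"
  by (simp add: stage_def)

lemma stage_above:
  assumes "m < i"
  shows "fst (stage Th thM n tau m c) i = fst c i" "snd (stage Th thM n tau m c) i = snd c i"
  using stage_fst[OF _ refl] stage_snd[OF _ refl] stage_none stage_source_above[OF assms] assms
  by (cases "\<exists>i. eligible Th thM n tau c m i"; simp)+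

lemma stage_dry:
  assumes "1 \<le> m"
  shows "\<not> wet Th thM n tau (stage Th thM n tau m c) m"
proof (cases "\<exists>i. eligible Th thM n tau c m i")
  case True
  then show ?thesis
    using stage_fst[OF True refl] stage_snd[OF True refl] by (simp add: wet_def stage_source_def)
next
  case False
  then have "\<not> wet Th thM n tau c m" using eligible_self[OF assms] by blast
  then show ?thesis using stage_none[OF False] by simp
qed

lemma stage_lifted_ge:
  assumes "\<exists>i. eligible Th thM n tau c m i" and "s = chosen Th thM n tau c m"
  shows "snd c m \<le> Th (thM (fst c s)) (zpos n m) tau"
proof (cases "s = m")
  case True
  then show ?thesis using chosen_wet_lifted[OF assms] by simp
next
  case False
  then have "can_pass tau c s m"
    using eligible_chosen[OF assms(1)] assms(2) by (simp add: eligible_iff)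
  then show ?thesis
    using Th_mono_w[of "thM (fst c m)" "thM (fst c s)" "zpos n m" tau]
    unfolding can_pass_def wet_def by auto
qed

text \<open>The invariant that keeps the profile sorted through stage \<open>m\<close>.\<close>

definition lift_below_next :: "real \<Rightarrow> config \<Rightarrow> nat \<Rightarrow> bool" where
  "lift_below_next tau c m \<longleftrightarrow>
     (\<forall>s. eligible Th thM n tau c m s \<longrightarrow> Th (thM (fst c s)) (zpos n m) tau \<le> snd c (Suc m))"

lemma stage_sorted:
  assumes m: "1 \<le> m" "m \<le> n" and sorted: "mono_on {1..n} (snd c)"
    and below: "m < n \<Longrightarrow> lift_below_next tau c m"
  shows "mono_on {1..n} (snd (stage Th thM n tau m c))"
proof (cases "\<exists>i. eligible Th thM n tau c m i")
  case True
  define s where "s = chosen Th thM n tau c m"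
  define w where "w = Th (thM (fst c s)) (zpos n m) tau"
  let ?g = "stage_source s m"
  have s: "1 \<le> s" "s \<le> m" using chosen_bounds[OF True] s_def by auto
  have v: "\<And>k. snd (stage Th thM n tau m c) k = (if k = m then w else snd c (?g k))"
    using stage_snd[OF True s_def] w_def by simp
  have low: "snd c k \<le> w" if "1 \<le> k" "k \<le> m" for k
    using mono_onD[OF sorted, of k m] that m stage_lifted_ge[OF True s_def] w_def by auto
  have up: "w \<le> snd c k" if "m < k" "k \<le> n" for k
  proof -
    have "w \<le> snd c (Suc m)"
      using below eligible_chosen[OF True] that s_def w_def unfolding lift_below_next_def by auto
    also have "\<dots> \<le> snd c k" using mono_onD[OF sorted, of "Suc m" k] that by auto
    finally show ?thesis .
  qed
  show ?thesis
  proof (rule mono_onI)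
    fix i j assume ij: "i \<in> {1..n}" "j \<in> {1..n}" "i \<le> j"
    consider "i = m" "j = m" | "i = m" "m < j" | "i \<noteq> m" "j = m" | "i \<noteq> m" "j \<noteq> m"
      using ij by linarith
    then show "snd (stage Th thM n tau m c) i \<le> snd (stage Th thM n tau m c) j"
    proof cases
      case 2
      then show ?thesis using v up ij stage_source_above by auto
    next
      case 3
      then have "1 \<le> ?g i" "?g i \<le> m" using ij s by (auto simp: stage_source_def)
      then show ?thesis using v low 3 by simp
    next
      case 4
      then have "?g i \<le> ?g j" "1 \<le> ?g i" "?g j \<le> n"
        using ij s m by (auto simp: stage_source_def)
      then show ?thesis using v 4 mono_onD[OF sorted] by simp
    qed simp
  qed
qed (use sorted stage_none in simp)

lemma lift_below_if_ineligible:
  assumes "eligible Th thM n tau c m s" "\<not> eligible Th thM n tau c (Suc m) s"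
    and "\<not> wet Th thM n tau c (Suc m)"
  shows "Th (thM (fst c s)) (zpos n m) tau \<le> snd c (Suc m)"
proof -
  have "\<not> can_pass tau c s (Suc m)"
    using assms(1,2) unfolding eligible_iff by (metis le_Suc_eq le_SucI)
  then have "Th (thM (fst c s)) (zpos n (Suc m)) tau \<le> snd c (Suc m)"
    using assms(3) unfolding can_pass_def by auto
  then show ?thesis using Th_mono_pos[of m "Suc m"] by (meson le_SucI order.trans order_refl)
qed

lemma eligible_if_dominates:
  assumes s': "eligible Th thM n tau c M s'" and gt: "thM (fst c s') < thM (fst c p)"
    and p: "1 \<le> p" "p \<le> M" "wet Th thM n tau c p"
    and before: "\<And>i. p < i \<Longrightarrow> i < s' \<Longrightarrow> can_pass tau c p i"
  shows "eligible Th thM n tau c M p"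
  unfolding eligible_iff
proof (intro conjI allI impI p)
  fix i assume i: "p < i \<and> i \<le> M"
  consider "i < s'" | "i = s'" | "s' < i" by linarith
  then show "can_pass tau c p i"
  proof cases
    case 2
    then show ?thesis using s' gt unfolding eligible_iff can_pass_def by auto
  next
    case 3
    then show ?thesis
      using s' i gt can_pass_mono[of tau c s' i p] unfolding eligible_iff by auto
  qed (use before i in auto)
qed

text \<open>No parcel eligible at stage \<open>m\<close> after stage \<open>m + 1\<close> has larger \<open>\<theta>\<^sup>M\<close> than the parcel chosen
  at stage \<open>m + 1\<close>: otherwise it would have been eligible, and preferred, there.\<close>

lemma chosen_dominates_after_stage:
  assumes ex: "\<exists>i. eligible Th thM n tau c (Suc m) i" and s': "s' = chosen Th thM n tau c (Suc m)"
    and es: "eligible Th thM n tau (stage Th thM n tau (Suc m) c) m s"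
  shows "thM (fst (stage Th thM n tau (Suc m) c) s) \<le> thM (fst c s')"
proof (rule ccontr)
  let ?c' = "stage Th thM n tau (Suc m) c" and ?g = "stage_source s' (Suc m)"
  assume "\<not> ?thesis"
  then have gt: "thM (fst c s') < thM (fst c (?g s))"
    using stage_fst[OF ex s'] by simp
  have s: "1 \<le> s" "s \<le> m" "wet Th thM n tau ?c' s"
    and pass: "\<And>i. s < i \<Longrightarrow> i \<le> m \<Longrightarrow> can_pass tau ?c' s i"
    using es unfolding eligible_iff by auto
  have "s \<le> ?g s" "1 \<le> ?g s" "?g s \<le> Suc m" using s by (auto simp: stage_source_def)
  have same_s: "fst ?c' s = fst c (?g s)" "snd ?c' s = snd c (?g s)"
    using stage_fst[OF ex s'] stage_snd[OF ex s'] s by auto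
  have "wet Th thM n tau c (?g s)"
    using s(3) same_s Th_mono_pos[OF \<open>s \<le> ?g s\<close>] unfolding wet_def by (metis order_less_le_trans)
  moreover have "can_pass tau c (?g s) i" if "?g s < i" "i < s'" for i
  proof -
    have "?g s = s" "i \<le> m" "?g i = i"
      using that s(2) chosen_bounds[OF ex] s' by (auto simp: stage_source_def split: if_splits)
    then have "fst ?c' i = fst c i" "snd ?c' i = snd c i"
      using stage_fst[OF ex s'] stage_snd[OF ex s'] by auto
    then show ?thesis
      using pass[of i] that \<open>?g s = s\<close> \<open>i \<le> m\<close> same_s unfolding can_pass_def wet_def by simp
  qed
  ultimately have "eligible Th thM n tau c (Suc m) (?g s)"
    by (rule eligible_if_dominates[OF eligible_chosen[OF ex, folded s'] gt \<open>1 \<le> ?g s\<close> \<open>?g s \<le> Suc m\<close>])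
  then have "thM (fst c (?g s)) \<le> thM (fst c s')" using chosen_max[OF ex] s' by simp
  with gt show False by simp
qed

lemma stage_lift_below_next:
  assumes "1 \<le> m"
  shows "lift_below_next tau (stage Th thM n tau (Suc m) c) m"
  unfolding lift_below_next_def
proof (intro allI impI)
  let ?c' = "stage Th thM n tau (Suc m) c"
  fix s assume es: "eligible Th thM n tau ?c' m s"
  show "Th (thM (fst ?c' s)) (zpos n m) tau \<le> snd ?c' (Suc m)"
  proof (cases "\<exists>i. eligible Th thM n tau c (Suc m) i")
    case False
    then have "?c' = c" "\<not> wet Th thM n tau c (Suc m)"
      using stage_none[OF False] eligible_self[of "Suc m" tau c] False by auto
    then show ?thesis using lift_below_if_ineligible es False by auto
  next
    case True
    define s' where "s' = chosen Th thM n tau c (Suc m)"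
    have "Th (thM (fst ?c' s)) (zpos n m) tau \<le> Th (thM (fst c s')) (zpos n m) tau"
      using chosen_dominates_after_stage[OF True s'_def es] by (rule Th_mono_w)
    also have "\<dots> \<le> Th (thM (fst c s')) (zpos n (Suc m)) tau" by (simp add: Th_mono_pos)
    also have "\<dots> = snd ?c' (Suc m)" using stage_snd[OF True s'_def] by simp
    finally show ?thesis .
  qed
qed

lemma sweep_sorted:
  "m \<le> n \<Longrightarrow> mono_on {1..n} (snd c) \<Longrightarrow> (0 < m \<and> m < n \<longrightarrow> lift_below_next tau c m) \<Longrightarrow>
    mono_on {1..n} (snd (sweep Th thM n tau m c))"
proof (induction m arbitrary: c)
  case (Suc m)
  let ?c' = "stage Th thM n tau (Suc m) c"
  have "mono_on {1..n} (snd ?c')" using Suc.prems by (intro stage_sorted) auto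
  moreover have "0 < m \<and> m < n \<longrightarrow> lift_below_next tau ?c' m"
    using stage_lift_below_next by simp
  ultimately have "mono_on {1..n} (snd (sweep Th thM n tau m ?c'))"
    using Suc.IH[of ?c'] Suc.prems(1) by simp
  then show ?case by simp
qed simp

lemma sweep_dry:
  "m \<le> n \<Longrightarrow> (\<forall>i. m < i \<and> i \<le> n \<longrightarrow> \<not> wet Th thM n tau c i) \<Longrightarrow>
    0 < i \<Longrightarrow> i \<le> n \<Longrightarrow> \<not> wet Th thM n tau (sweep Th thM n tau m c) i"
proof (induction m arbitrary: c)
  case (Suc m)
  have "\<not> wet Th thM n tau (stage Th thM n tau (Suc m) c) i" if "m < i" "i \<le> n" for i
    using that Suc.prems stage_dry[of "Suc m"] stage_above[of "Suc m" i]
    by (cases "i = Suc m") (auto simp: wet_def)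
  then show ?case using Suc by simp
qed simp

lemma sweep_perm:
  "m \<le> n \<Longrightarrow> bij_betw (fst c) {1..n} {1..n} \<Longrightarrow>
    bij_betw (fst (sweep Th thM n tau m c)) {1..n} {1..n}"
proof (induction m arbitrary: c)
  case (Suc m)
  have "bij_betw (fst (stage Th thM n tau (Suc m) c)) {1..n} {1..n}"
  proof (cases "\<exists>i. eligible Th thM n tau c (Suc m) i")
    case True
    have src: "bij_betw (stage_source (chosen Th thM n tau c (Suc m)) (Suc m)) {1..n} {1..n}"
      using chosen_bounds[OF True] Suc.prems(1) by (intro bij_betw_stage_source) auto
    show ?thesis
      using bij_betw_trans[OF src Suc.prems(2)] stage_fst[OF True refl] by simp
  qed (use Suc.prems stage_none in simp)
  then show ?case using Suc by simp
qed simp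

definition parcel_values_rise :: "config \<Rightarrow> config \<Rightarrow> bool" where
  "parcel_values_rise c c' \<longleftrightarrow>
     (\<forall>i\<in>{1..n}. \<exists>i'\<in>{1..n}. fst c' i' = fst c i \<and> snd c i \<le> snd c' i')"

lemma parcel_values_rise_refl: "parcel_values_rise c c"
  unfolding parcel_values_rise_def by auto

lemma parcel_values_rise_trans:
  assumes ab: "parcel_values_rise a b" and bc: "parcel_values_rise b c"
  shows "parcel_values_rise a c"
  unfolding parcel_values_rise_def
proof
  fix i assume "i \<in> {1..n}"
  then obtain i' where "i' \<in> {1..n}" "fst b i' = fst a i" "snd a i \<le> snd b i'"
    using ab unfolding parcel_values_rise_def by blast
  moreover obtain i'' where "i'' \<in> {1..n}" "fst c i'' = fst b i'" "snd b i' \<le> snd c i''"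
    using bc \<open>i' \<in> {1..n}\<close> unfolding parcel_values_rise_def by blast
  ultimately show "\<exists>i''\<in>{1..n}. fst c i'' = fst a i \<and> snd a i \<le> snd c i''" by force
qed

lemma stage_values_rise:
  assumes "m \<le> n" shows "parcel_values_rise c (stage Th thM n tau m c)"
proof (cases "\<exists>i. eligible Th thM n tau c m i")
  case ex: True
  define s where "s = chosen Th thM n tau c m"
  let ?c' = "stage Th thM n tau m c"
  have s: "1 \<le> s" "s \<le> m" using chosen_bounds[OF ex] s_def by auto
  note fst' = stage_fst[OF ex s_def] and snd' = stage_snd[OF ex s_def]
  show ?thesis unfolding parcel_values_rise_def
  proof
    fix i assume "i \<in> {1..n}"
    then have "i \<in> stage_source s m ` {1..n}"
      using bij_betw_imp_surj_on[OF bij_betw_stage_source[OF s assms]] by simp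
    then obtain i' where i': "i' \<in> {1..n}" "stage_source s m i' = i" by blast
    have "fst ?c' i' = fst c i \<and> snd c i \<le> snd ?c' i'"
    proof (cases "i' = m")
      case True
      then have "i = s" using i' by (simp add: stage_source_def)
      then show ?thesis
        using True fst' snd' chosen_wet_lifted[OF ex s_def] by (simp add: stage_source_def)
    qed (use i' fst' snd' in simp)
    with i' show "\<exists>i'\<in>{1..n}. fst ?c' i' = fst c i \<and> snd c i \<le> snd ?c' i'" by blast
  qed
qed (simp add: stage_none parcel_values_rise_refl)

lemma sweep_values_rise: "m \<le> n \<Longrightarrow> parcel_values_rise c (sweep Th thM n tau m c)"
proof (induction m arbitrary: c)
  case (Suc m)
  let ?c' = "stage Th thM n tau (Suc m) c"
  have "parcel_values_rise c ?c'" using Suc.prems by (rule stage_values_rise)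
  moreover have "parcel_values_rise ?c' (sweep Th thM n tau m ?c')" using Suc by simp
  ultimately show ?case unfolding sweep.simps by (rule parcel_values_rise_trans)
qed (simp add: parcel_values_rise_refl)

lemma cfg_perm: "bij_betw (fst (cfg Th thM n dt th0 k)) {1..n} {1..n}"
proof (induction k)
  case (Suc k)
  then show ?case unfolding cfg.simps by (rule sweep_perm[OF order_refl])
qed (simp add: bij_betw_id[unfolded id_def])

lemma cfg_sorted: "mono_on {1..n} th0 \<Longrightarrow> mono_on {1..n} (snd (cfg Th thM n dt th0 k))"
proof (induction k)
  case (Suc k)
  then show ?case unfolding cfg.simps by (intro sweep_sorted) simp_all
qed simp

lemma cfg_dry:
  assumes "0 < i" "i \<le> n"
  shows "\<not> wet Th thM n (real (Suc k) * dt) (cfg Th thM n dt th0 (Suc k)) i"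
  unfolding cfg.simps by (rule sweep_dry[OF order_refl _ assms]) auto

lemma cfg_values_rise:
  "k1 \<le> k2 \<Longrightarrow> parcel_values_rise (cfg Th thM n dt th0 k1) (cfg Th thM n dt th0 k2)"
proof (induction k2 rule: dec_induct)
  case (step k)
  then show ?case using parcel_values_rise_trans[OF step.IH sweep_values_rise[OF order_refl]] by simp
qed (rule parcel_values_rise_refl)

lemma alpha_eq:
  assumes "bij_betw (fst c) {1..n} {1..n}" "i \<in> {1..n}"
  shows "alpha c n (fst c i) = i"
  unfolding alpha_def
proof (rule the_equality)
  fix i' assume "1 \<le> i' \<and> i' \<le> n \<and> fst c i' = fst c i"
  then show "i' = i"
    using inj_onD[OF bij_betw_imp_inj_on[OF assms(1)], of i' i] assms(2) by simp
qed (use assms(2) in simp)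

lemma alpha_in_range:
  assumes "bij_betw (fst c) {1..n} {1..n}" "j \<in> {1..n}"
  shows "alpha c n j \<in> {1..n}" "fst c (alpha c n j) = j"
proof -
  have "j \<in> fst c ` {1..n}" using bij_betw_imp_surj_on[OF assms(1)] assms(2) by simp
  then obtain i where i: "i \<in> {1..n}" "fst c i = j" by blast
  then have "alpha c n j = i" using alpha_eq[OF assms(1) i(1)] by simp
  with i show "alpha c n j \<in> {1..n}" "fst c (alpha c n j) = j" by simp_all
qed

lemma cell_F_n:
  assumes "1 \<le> n" "0 \<le> z" "z < 1"
  shows "cell n (F_n Th thM n dt th0 t z) = alpha (cfg Th thM n dt th0 (tindex dt t)) n (cell n z)"
  using alpha_in_range(1)[OF cfg_perm] cell_bounds[OF assms] cell_shift[OF assms(1,2)]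
  unfolding F_n_def Let_def by simp

lemma theta_n_mono:
  assumes "mono_on {1..n} th0" "1 \<le> n" "0 \<le> z1" "z1 \<le> z2" "z2 < 1"
  shows "theta_n Th thM n dt th0 t z1 \<le> theta_n Th thM n dt th0 t z2"
proof -
  have "cell n z1 \<in> {1..n}" "cell n z2 \<in> {1..n}"
    using cell_bounds[OF assms(2)] assms(3-5) by auto
  then show ?thesis
    unfolding theta_n_def by (rule mono_onD[OF cfg_sorted[OF assms(1)]]) (rule cell_mono[OF assms(4)])
qed

lemma theta_n_plus_q_n_along_F_n:
  assumes "1 \<le> n" "0 \<le> z" "z < 1"
  shows "theta_n Th thM n dt th0 t (F_n Th thM n dt th0 t z) + q_n Th thM n dt th0 t (F_n Th thM n dt th0 t z)
    = thM (cell n z)"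
  using alpha_in_range(2)[OF cfg_perm] cell_bounds[OF assms]
  unfolding theta_n_def q_n_def Let_def cell_F_n[OF assms] by simp

lemma theta_n_along_F_n_mono:
  assumes "1 \<le> n" "0 \<le> dt" "0 \<le> z" "z < 1" "t1 \<le> t2"
  shows "theta_n Th thM n dt th0 t1 (F_n Th thM n dt th0 t1 z)
    \<le> theta_n Th thM n dt th0 t2 (F_n Th thM n dt th0 t2 z)"
proof -
  let ?c1 = "cfg Th thM n dt th0 (tindex dt t1)" and ?c2 = "cfg Th thM n dt th0 (tindex dt t2)"
  have j: "cell n z \<in> {1..n}" using cell_bounds[OF assms(1,3,4)] by simp
  define a1 where "a1 = alpha ?c1 n (cell n z)"
  have a1: "a1 \<in> {1..n}" "fst ?c1 a1 = cell n z"
    using alpha_in_range[OF cfg_perm j] unfolding a1_def by simp_all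
  have "parcel_values_rise ?c1 ?c2" by (rule cfg_values_rise[OF tindex_mono[OF assms(2,5)]])
  then obtain a2 where a2: "a2 \<in> {1..n}" "fst ?c2 a2 = cell n z" "snd ?c1 a1 \<le> snd ?c2 a2"
    using a1 unfolding parcel_values_rise_def by metis
  have "alpha ?c2 n (cell n z) = a2"
    using alpha_eq[OF cfg_perm[of dt th0 "tindex dt t2"] a2(1)] a2(2) by simp
  with a2(3) show ?thesis unfolding theta_n_def cell_F_n[OF assms(1,3,4)] a1_def by simp
qed

lemma q_n_le_Qsat:
  fixes Qsat :: "real \<Rightarrow> real \<Rightarrow> real \<Rightarrow> real"
  assumes Th_solves: "\<And>w z t. Th w z t + Qsat (Th w z t) z t = w"
    and mono_sat: "\<And>z t. mono (\<lambda>x. x + Qsat x z t)"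
    and antimono_Qsat: "\<And>x t. antimono (\<lambda>z. Qsat x z t)"
    and init: "\<And>j. 1 \<le> j \<Longrightarrow> j \<le> n \<Longrightarrow> thM j - th0 j \<le> Qsat (th0 j) (zpos n j) 0"
    and n: "1 \<le> n" and z: "0 \<le> z" "z < 1"
  shows "q_n Th thM n dt th0 t z \<le> Qsat (theta_n Th thM n dt th0 t z) z (real (tindex dt t) * dt)"
proof -
  define i where "i = cell n z"
  define k where "k = tindex dt t"
  let ?c = "cfg Th thM n dt th0 k"
  have i: "1 \<le> i" "i \<le> n" "z \<le> zpos n i" using cell_bounds[OF n z] i_def by auto
  have "thM (fst ?c i) - snd ?c i \<le> Qsat (snd ?c i) (zpos n i) (real k * dt)"
  proof (cases k)
    case 0
    then show ?thesis using init[OF i(1,2)] by simp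
  next
    case (Suc k')
    have "0 < i" using i(1) by simp
    from cfg_dry[OF this i(2), of k' dt th0]
    have "Th (thM (fst ?c i)) (zpos n i) (real k * dt) \<le> snd ?c i"
      unfolding wet_def Suc by simp
    then have "thM (fst ?c i) \<le> snd ?c i + Qsat (snd ?c i) (zpos n i) (real k * dt)"
      using monoD[OF mono_sat] Th_solves by metis
    then show ?thesis by simp
  qed
  also have "\<dots> \<le> Qsat (snd ?c i) z (real k * dt)" using antimonoD[OF antimono_Qsat i(3)] .
  finally show ?thesis unfolding q_n_def theta_n_def Let_def i_def k_def .
qed

end

theorem corollary3p3:
  fixes Qsat Th :: "real \<Rightarrow> real \<Rightarrow> real \<Rightarrow> real"
    and T dt :: real and n :: nat and th0 q0 :: "nat \<Rightarrow> real"
  assumes dQ_theta: "\<And>th z t. \<exists>d>0. ((\<lambda>s. Qsat s z t) has_real_derivative d) (at th)"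
    and dQ_z: "\<And>th z t. \<exists>d<0. ((\<lambda>s. Qsat th s t) has_real_derivative d) (at z)"
    and Th_solves: "\<And>w z t. Th w z t + Qsat (Th w z t) z t = w"
    and dTh_w: "\<And>w z t. \<exists>d>0. ((\<lambda>s. Th s z t) has_real_derivative d) (at w)"
    and dTh_z: "\<And>w z t. \<exists>d>0. ((\<lambda>s. Th w s t) has_real_derivative d) (at z)"
    and T_pos: "T > 0" and n_pos: "n \<ge> 1" and dt_pos: "dt > 0"
    and th0_mono: "\<And>i j. 1 \<le> i \<Longrightarrow> i \<le> j \<Longrightarrow> j \<le> n \<Longrightarrow> th0 i \<le> th0 j"
    and q0_le: "\<And>j. 1 \<le> j \<Longrightarrow> j \<le> n \<Longrightarrow> q0 j \<le> Qsat (th0 j) (zpos n j) 0"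
  defines "thM \<equiv> (\<lambda>j. th0 j + q0 j)"
  shows
    "(\<forall>t z1 z2. 0 \<le> t \<and> t < T \<and> 0 \<le> z1 \<and> z1 \<le> z2 \<and> z2 < 1 \<longrightarrow>
        theta_n Th thM n dt th0 t z1 \<le> theta_n Th thM n dt th0 t z2)
     \<and> (\<forall>t z. 0 \<le> t \<and> t < T \<and> 0 \<le> z \<and> z < 1 \<longrightarrow>
        theta_n Th thM n dt th0 t (F_n Th thM n dt th0 t z)
          + q_n Th thM n dt th0 t (F_n Th thM n dt th0 t z)
        = theta0_n n th0 z + q0_n n q0 z)
     \<and> (\<forall>z t1 t2. 0 \<le> z \<and> z < 1 \<and> 0 \<le> t1 \<and> t1 \<le> t2 \<and> t2 < T \<longrightarrow>
        theta_n Th thM n dt th0 t1 (F_n Th thM n dt th0 t1 z)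
          \<le> theta_n Th thM n dt th0 t2 (F_n Th thM n dt th0 t2 z))
     \<and> (\<forall>t z. 0 \<le> t \<and> t < T \<and> 0 \<le> z \<and> z < 1 \<longrightarrow>
        q_n Th thM n dt th0 t z
          \<le> Qsat (theta_n Th thM n dt th0 t z) z (real (tindex dt t) * dt))"
proof -
  interpret parcel_scheme Th thM n
    by unfold_locales (rule DERIV_pos_imp_mono, rule dTh_w dTh_z)+
  have mono_sat: "mono (\<lambda>x. x + Qsat x z t)" for z t
  proof (rule DERIV_pos_imp_mono)
    fix x
    obtain d where "d > 0" "((\<lambda>s. Qsat s z t) has_real_derivative d) (at x)" using dQ_theta by blast
    then show "\<exists>d>0. ((\<lambda>x. x + Qsat x z t) has_real_derivative d) (at x)"
      by (intro exI[of _ "1 + d"]) (simp add: DERIV_add[OF DERIV_ident])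
  qed
  have antimono_Qsat: "antimono (\<lambda>z. Qsat x z t)" for x t
    using dQ_z by (rule DERIV_neg_imp_antimono)
  have "mono_on {1..n} th0" using th0_mono by (auto intro: mono_onI)
  then show ?thesis
    using theta_n_mono theta_n_plus_q_n_along_F_n theta_n_along_F_n_mono
      q_n_le_Qsat[OF Th_solves mono_sat antimono_Qsat] q0_le n_pos dt_pos
    by (auto simp: thM_def theta0_n_def q0_n_def less_imp_le)
qed

end
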